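(* Under the standing assumptions, let $\lambda_*>0$. Then $J(u)\ge\lambda_*H(u)$ for all $u\in X$ if and only if $J^*(\zeta)\le\lambda_*^{1-q}H^*(\zeta)$ for all $\zeta\in X^*$. Moreover, if $u_*$ is a $p$-eigenvector of $J$ with subgradient $\zeta_*$ and eigenvalue $\lambda_*=\min_{u\ne0}R(u)$, then $R_*(\zeta_* )=\lambda_*^{1-q}=\max_{\zeta\ne0}R_*(\zeta)$, so both bounds are sharp.
   Context: Standing assumptions: $X$ is a real reflexive Banach space with dual $X^*$ and duality pairing $\langle\cdot,\cdot\rangle$; $\Gamma_0(X)$ is the class of proper, lower semi-continuous, convex functionals $X\to\mathbb{R}\cup\{+\infty\}$. Fix $1<p<\infty$ and $q=\frac{p}{p-1}$. Let $J\in\Gamma_0(X)$, and let $H\in\Gamma_0(X)$ be absolutely $p$-homogeneous ($H(tu)=|t|^pH(u)$) such that $|u|_H:=(pH(u))^{1/p}$ is a norm on $X$, so $H(u)=\frac1p|u|_H^p$. The dual norm is $|\zeta|_{H^*}=\sup_{u\ne0}\langle\zeta,u\rangle/|u|_H$, and $H^*(\zeta)=\frac1q|\zeta|_{H^*}^q$. The Fenchel conjugate is $J^*(\zeta)=\sup_{u\in X}\langle\zeta,u\rangle-J(u)$ and the subdifferential is $\partial J(u)=\{\zeta\in X^*:\ J(u)+\langle\zeta,v-u\rangle\le J(v)\ \forall v\in X\}$. Growth assumption: there is $c>0$ with $H(u)\le cJ(u)$ for all $u\in X$. The Rayleigh quotient is $R(u)=J(u)/H(u)$ for $u\ne0$ and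 the dual Rayleigh quotient is $R_*(\zeta)=J^*(\zeta)/H^*(\zeta)$ for $\zeta\ne0$. A $p$-eigenvector of $J$: $u\in X\setminus\{0\}$ with subgradient $\zeta\in\partial J(u)$ and eigenvalue $\lambda=R(u)\in\mathbb{R}$ such that $\zeta\in\lambda\,\partial H(u)$. *)

theory Defs
  imports "HOL-Analysis.Analysis"
begin

text \<open>The real Banach space X is a type 'a of class banach; its dual X* is the type
  'a \<Rightarrow>L real of bounded linear functionals; the duality pairing of z and u is
  blinfun_apply z u.  Functionals X \<rightarrow> R \<union> {+\<infinity>} are modelled as maps into ereal
  that never take the value -\<infinity>.\<close>

definition reflexive_space :: "'a::real_normed_vector itself \<Rightarrow> bool" where
  "reflexive_space _ \<longleftrightarrow>
     (\<forall>phi :: ('a \<Rightarrow>\<^sub>L real) \<Rightarrow>\<^sub>L real. \<exists>u::'a. \<forall>z. blinfun_apply phi z = blinfun_apply z u)"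

definition proper_fun :: "('a \<Rightarrow> ereal) \<Rightarrow> bool" where
  "proper_fun f \<longleftrightarrow> (\<forall>x. f x \<noteq> -\<infinity>) \<and> (\<exists>x. f x \<noteq> \<infinity>)"

definition lsc_fun :: "('a::topological_space \<Rightarrow> ereal) \<Rightarrow> bool" where
  "lsc_fun f \<longleftrightarrow> (\<forall>c::real. closed {x. f x \<le> ereal c})"

definition convex_fun :: "('a::real_vector \<Rightarrow> ereal) \<Rightarrow> bool" where
  "convex_fun f \<longleftrightarrow> (\<forall>x y t. 0 < t \<and> t < 1 \<longrightarrow>
      f (t *\<^sub>R x + (1 - t) *\<^sub>R y) \<le> ereal t * f x + ereal (1 - t) * f y)"

definition Gamma0 :: "('a::real_normed_vector \<Rightarrow> ereal) \<Rightarrow> bool" where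
  "Gamma0 f \<longleftrightarrow> proper_fun f \<and> lsc_fun f \<and> convex_fun f"

definition is_norm :: "('a::real_vector \<Rightarrow> real) \<Rightarrow> bool" where
  "is_norm N \<longleftrightarrow> (\<forall>x. N x = 0 \<longleftrightarrow> x = 0) \<and> (\<forall>c x. N (c *\<^sub>R x) = \<bar>c\<bar> * N x)
     \<and> (\<forall>x y. N (x + y) \<le> N x + N y)"

definition H_norm :: "real \<Rightarrow> ('a \<Rightarrow> ereal) \<Rightarrow> 'a \<Rightarrow> real" where
  "H_norm p H u = (p * real_of_ereal (H u)) powr (1 / p)"

text \<open>Standing assumptions on H: in Gamma0, absolutely p-homogeneous, and |.|_H is a
  (real-valued) norm on X.\<close>
definition admissible_H :: "real \<Rightarrow> ('a::real_normed_vector \<Rightarrow> ereal) \<Rightarrow> bool" where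
  "admissible_H p H \<longleftrightarrow> Gamma0 H \<and> (\<forall>t u. H (t *\<^sub>R u) = ereal (\<bar>t\<bar> powr p) * H u)
     \<and> (\<forall>u. H u \<noteq> \<infinity>) \<and> is_norm (H_norm p H)"

definition fenchel_conj :: "('a \<Rightarrow> ereal) \<Rightarrow> ('a::real_normed_vector \<Rightarrow>\<^sub>L real) \<Rightarrow> ereal" where
  "fenchel_conj J z = (SUP u. ereal (blinfun_apply z u) - J u)"

definition subdiff :: "('a::real_normed_vector \<Rightarrow> ereal) \<Rightarrow> 'a \<Rightarrow> ('a \<Rightarrow>\<^sub>L real) set" where
  "subdiff J u = {z. \<forall>v. J u + ereal (blinfun_apply z (v - u)) \<le> J v}"

definition rayleigh :: "('a \<Rightarrow> ereal) \<Rightarrow> ('a \<Rightarrow> ereal) \<Rightarrow> 'a \<Rightarrow> ereal" where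
  "rayleigh J H u = J u / H u"

definition dual_rayleigh :: "('a::real_normed_vector \<Rightarrow> ereal) \<Rightarrow> ('a \<Rightarrow> ereal)
    \<Rightarrow> ('a \<Rightarrow>\<^sub>L real) \<Rightarrow> ereal" where
  "dual_rayleigh J H z = fenchel_conj J z / fenchel_conj H z"

definition p_eigenvector :: "('a::real_normed_vector \<Rightarrow> ereal) \<Rightarrow> ('a \<Rightarrow> ereal)
    \<Rightarrow> 'a \<Rightarrow> ('a \<Rightarrow>\<^sub>L real) \<Rightarrow> real \<Rightarrow> bool" where
  "p_eigenvector J H u z lam \<longleftrightarrow> u \<noteq> 0 \<and> z \<in> subdiff J u \<and> rayleigh J H u = ereal lam
     \<and> z \<in> (\<lambda>w. lam *\<^sub>R w) ` subdiff H u"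

end

(* If J >= lam H then J* <= (lam H)*, and since H* is q-homogeneous, (lam H)* = lam^(1-q) H*.
   Conversely, H has a subgradient w at every u: w = |u|_H^(p-1) z for a Hahn-Banach functional z
   norming u, which is continuous because |.|_H has closed sublevel sets and hence, by Baire's
   theorem, is bounded by a multiple of the norm of X. Testing J* <= lam^(1-q) H* at lam w and using
   the Fenchel-Young equality H*(w) = w(u) - H(u) yields J(u) >= lam H(u).
   For an eigenvector the Fenchel-Young equality evaluates J*(zeta) and H*(zeta) exactly, and with
   Euler's identity w(u) = p H(u) their quotient is lam^(1-q); the first part bounds R_* by the same
   value. *)

theory Submission
  imports Defs
begin

section \<open>Hahn-Banach for sublinear functionals\<close>

(* Partial linear functionals are encoded by their graphs; single-valuedness need not be
   required, as it follows from domination once P 0 = 0. *)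
definition dominated_graph :: "('a::real_vector \<Rightarrow> real) \<Rightarrow> ('a \<times> real) set \<Rightarrow> bool" where
  "dominated_graph P G \<longleftrightarrow> subspace G \<and> (\<forall>(x, a) \<in> G. a \<le> P x)"

lemma dominated_graph_unique:
  assumes "dominated_graph P G" "P 0 = 0" "(x, a) \<in> G" "(x, b) \<in> G"
  shows "a = b"
proof -
  have "(0, a - b) \<in> G" "(0, b - a) \<in> G"
    using assms subspace_diff[of G] unfolding dominated_graph_def by force+
  then have "a - b \<le> P 0" "b - a \<le> P 0" using assms(1) unfolding dominated_graph_def by auto
  then show ?thesis using assms(2) by simp
qed

lemma dominated_graph_Union_chain:
  assumes "C \<in> chains {G. dominated_graph P G}" "C \<noteq> {}"
  shows "dominated_graph P (\<Union>C)"
proof -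
  have dom: "dominated_graph P G" if "G \<in> C" for G
    using assms(1) that chainsD2 by blast
  have common: "\<exists>G\<in>C. x \<in> G \<and> y \<in> G" if "x \<in> \<Union>C" "y \<in> \<Union>C" for x y
    using that chainsD[OF assms(1)] by blast
  have "subspace (\<Union>C)"
    unfolding subspace_def
  proof (intro conjI ballI allI)
    show "0 \<in> \<Union>C" using assms(2) dom subspace_0 unfolding dominated_graph_def by blast
    show "x + y \<in> \<Union>C" if "x \<in> \<Union>C" "y \<in> \<Union>C" for x y
      using common[OF that] dom subspace_add unfolding dominated_graph_def by blast
    show "c *\<^sub>R x \<in> \<Union>C" if "x \<in> \<Union>C" for c x
      using that dom subspace_scale unfolding dominated_graph_def by blast
  qed
  then show ?thesis using dom unfolding dominated_graph_def by blast
qed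

lemma dominated_graph_separating_value:
  fixes P :: "'a::real_vector \<Rightarrow> real"
  assumes sub: "\<And>x y. P (x + y) \<le> P x + P y" and G: "dominated_graph P G"
  obtains c where "\<And>y a. (y, a) \<in> G \<Longrightarrow> a - P (y - x0) \<le> c"
    and "\<And>y a. (y, a) \<in> G \<Longrightarrow> c \<le> P (y + x0) - a"
proof -
  have GG: "subspace G" and dom: "\<And>y a. (y, a) \<in> G \<Longrightarrow> a \<le> P y"
    using G unfolding dominated_graph_def by auto
  have gap: "a - P (y - x0) \<le> P (y' + x0) - a'" if "(y, a) \<in> G" "(y', a') \<in> G" for y a y' a'
  proof -
    have "a + a' \<le> P (y + y')" using dom subspace_add[OF GG that] by simp
    also have "\<dots> \<le> P (y - x0) + P (y' + x0)" using sub[of "y - x0" "y' + x0"] by simp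
    finally show ?thesis by simp
  qed
  have zero: "(0, 0) \<in> G" using subspace_0[OF GG] by (simp add: zero_prod_def)
  then have bdd: "bdd_above ((\<lambda>(y, a). a - P (y - x0)) ` G)"
    using gap[OF _ zero] by (auto intro!: bdd_aboveI)
  show ?thesis
  proof
    show "a - P (y - x0) \<le> (SUP (y, a) \<in> G. a - P (y - x0))" if "(y, a) \<in> G" for y a
      using cSUP_upper[OF that bdd] by simp
    show "(SUP (y, a) \<in> G. a - P (y - x0)) \<le> P (y + x0) - a" if "(y, a) \<in> G" for y a
      using zero that gap by (intro cSUP_least) auto
  qed
qed

lemma dominated_graph_extend:
  fixes P :: "'a::real_vector \<Rightarrow> real"
  assumes sub: "\<And>x y. P (x + y) \<le> P x + P y"
    and hom: "\<And>c x. 0 \<le> c \<Longrightarrow> P (c *\<^sub>R x) = c * P x"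
    and G: "dominated_graph P G"
  shows "\<exists>c. dominated_graph P (span (insert (x0, c) G))"
proof -
  have GG: "subspace G" and dom: "\<And>y a. (y, a) \<in> G \<Longrightarrow> a \<le> P y"
    using G unfolding dominated_graph_def by auto
  have scaled: "(s *\<^sub>R y, s * a) \<in> G" if "(y, a) \<in> G" for s y a
    using subspace_scale[OF GG that, of s] by simp
  obtain c where c_lower: "\<And>y a. (y, a) \<in> G \<Longrightarrow> a - P (y - x0) \<le> c"
    and c_upper: "\<And>y a. (y, a) \<in> G \<Longrightarrow> c \<le> P (y + x0) - a"
    using dominated_graph_separating_value[OF sub G] by metis
  have "b \<le> P x" if mem: "(x, b) \<in> span (insert (x0, c) G)" for x b
  proof -
    obtain k where "(x, b) - k *\<^sub>R (x0, c) \<in> G"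
      using mem span_breakdown_eq span_eq_iff GG by metis
    then obtain y a where ya: "(y, a) \<in> G" "x = y + k *\<^sub>R x0" "b = a + k * c"
      by force
    consider "k = 0" | "k > 0" | "k < 0" by linarith
    then show ?thesis
    proof cases
      case 1 then show ?thesis using ya dom by simp
    next
      case 2
      have x: "k *\<^sub>R ((1 / k) *\<^sub>R y + x0) = x" using ya 2 by (simp add: algebra_simps)
      have "k * c \<le> k * (P ((1 / k) *\<^sub>R y + x0) - a / k)"
        using c_upper[OF scaled[OF ya(1), of "1 / k"]] 2 by (intro mult_left_mono) auto
      also have "\<dots> = P x - a"
        using hom[of k "(1 / k) *\<^sub>R y + x0"] 2 by (simp add: x right_diff_distrib)
      finally show ?thesis using ya by simp
    next
      case 3
      define m where "m = -k"
      have m: "m > 0" using 3 by (simp add: m_def)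
      have x: "m *\<^sub>R ((1 / m) *\<^sub>R y - x0) = x" using ya m by (simp add: m_def algebra_simps)
      have "a - P x = m * (a / m - P ((1 / m) *\<^sub>R y - x0))"
        using hom[of m "(1 / m) *\<^sub>R y - x0"] m by (simp add: x right_diff_distrib)
      also have "\<dots> \<le> m * c"
        using c_lower[OF scaled[OF ya(1), of "1 / m"]] m by (intro mult_left_mono) auto
      finally show ?thesis using ya by (simp add: m_def)
    qed
  qed
  then show ?thesis unfolding dominated_graph_def by auto
qed

lemma dominated_graph_line:
  fixes P :: "'a::real_vector \<Rightarrow> real"
  assumes sub: "\<And>x y. P (x + y) \<le> P x + P y"
    and hom: "\<And>c x. 0 \<le> c \<Longrightarrow> P (c *\<^sub>R x) = c * P x"
  shows "dominated_graph P (span {(u0, P u0)})"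
  unfolding dominated_graph_def span_singleton
proof (intro conjI ballI)
  show "subspace (range (\<lambda>k. k *\<^sub>R (u0, P u0)))" using span_singleton by (metis subspace_span)
  fix g assume "g \<in> range (\<lambda>k. k *\<^sub>R (u0, P u0))"
  then obtain k where g: "g = (k *\<^sub>R u0, k * P u0)" by auto
  have "k * P u0 \<le> P (k *\<^sub>R u0)"
  proof (cases "k \<ge> 0")
    case False
    have "P 0 \<le> P (k *\<^sub>R u0) + P ((-k) *\<^sub>R u0)" using sub[of "k *\<^sub>R u0" "(-k) *\<^sub>R u0"]
      by (simp flip: scaleR_add_left)
    then show ?thesis using hom[of "-k" u0] hom[of 0 0] False by simp
  qed (simp add: hom)
  then show "case g of (x, a) \<Rightarrow> a \<le> P x" using g by simp
qed

lemma total_dominated_graph_exists: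
  fixes P :: "'a::real_vector \<Rightarrow> real"
  assumes sub: "\<And>x y. P (x + y) \<le> P x + P y"
    and hom: "\<And>c x. 0 \<le> c \<Longrightarrow> P (c *\<^sub>R x) = c * P x"
  obtains M where "dominated_graph P M" "(u0, P u0) \<in> M" "\<And>x. \<exists>a. (x, a) \<in> M"
proof -
  define \<F> where "\<F> = {G. dominated_graph P G \<and> (u0, P u0) \<in> G}"
  have "\<exists>M\<in>\<F>. \<forall>G\<in>\<F>. M \<subseteq> G \<longrightarrow> G = M"
  proof (rule Zorn_Lemma2, intro ballI)
    fix C assume C: "C \<in> chains \<F>"
    show "\<exists>U\<in>\<F>. \<forall>G\<in>C. G \<subseteq> U"
    proof (cases "C = {}")
      case True
      then show ?thesis using dominated_graph_line[OF sub hom] span_superset unfolding \<F>_def by blast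
    next
      case False
      have "C \<in> chains {G. dominated_graph P G}"
        using C unfolding \<F>_def chains_def by blast
      then have "\<Union>C \<in> \<F>"
        using dominated_graph_Union_chain False chainsD2[OF C] unfolding \<F>_def by blast
      then show ?thesis by blast
    qed
  qed
  then obtain M where M: "dominated_graph P M" "(u0, P u0) \<in> M"
    and maximal: "\<And>G. dominated_graph P G \<Longrightarrow> M \<subseteq> G \<Longrightarrow> G = M"
    unfolding \<F>_def by blast
  have "\<exists>a. (x, a) \<in> M" for x
  proof -
    obtain c where "dominated_graph P (span (insert (x, c) M))"
      using dominated_graph_extend[OF sub hom M(1)] by blast
    moreover have "M \<subseteq> span (insert (x, c) M)"
      using span_superset by (meson subset_insertI order_trans)
    ultimately have "span (insert (x, c) M) = M"
      using maximal by blast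
    then show ?thesis using span_superset by blast
  qed
  then show ?thesis using M that by blast
qed

lemma hahn_banach_sublinear:
  fixes P :: "'a::real_vector \<Rightarrow> real"
  assumes sub: "\<And>x y. P (x + y) \<le> P x + P y"
    and hom: "\<And>c x. 0 \<le> c \<Longrightarrow> P (c *\<^sub>R x) = c * P x"
  shows "\<exists>f. linear f \<and> f u0 = P u0 \<and> (\<forall>x. f x \<le> P x)"
proof -
  obtain M where M: "dominated_graph P M" "(u0, P u0) \<in> M" and total: "\<And>x. \<exists>a. (x, a) \<in> M"
    using total_dominated_graph_exists[OF sub hom] by blast
  have P0: "P 0 = 0" using hom[of 0 0] by simp
  have subM: "subspace M" using M(1) unfolding dominated_graph_def by blast
  define f where "f x = (THE a. (x, a) \<in> M)" for x
  have f_eq: "f x = a" if "(x, a) \<in> M" for x a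
    unfolding f_def using that dominated_graph_unique[OF M(1) P0] by blast
  have graph: "(x, f x) \<in> M" for x using total f_eq by blast
  have "linear f"
  proof (rule linearI)
    show "f (x + y) = f x + f y" for x y
      using f_eq subspace_add[OF subM graph[of x] graph[of y]] by simp
    show "f (c *\<^sub>R x) = c *\<^sub>R f x" for c x
      using f_eq subspace_scale[OF subM graph[of x], of c] by simp
  qed
  moreover have "f x \<le> P x" for x using graph M(1) unfolding dominated_graph_def by blast
  ultimately show ?thesis using f_eq[OF M(2)] by blast
qed

section \<open>Norms and subgradients of their powers\<close>

lemma is_normD:
  assumes "is_norm N"
  shows "N 0 = 0" "N (c *\<^sub>R x) = \<bar>c\<bar> * N x" "N (x + y) \<le> N x + N y" "N (- x) = N x"
    "0 \<le> N x" "N x = 0 \<longleftrightarrow> x = 0"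
proof -
  show scale: "N (c *\<^sub>R x) = \<bar>c\<bar> * N x" for c x using assms unfolding is_norm_def by blast
  show tri: "N (x + y) \<le> N x + N y" for x y using assms unfolding is_norm_def by blast
  show "N x = 0 \<longleftrightarrow> x = 0" using assms unfolding is_norm_def by blast
  show "N 0 = 0" using scale[of 0] by simp
  show neg: "N (- x) = N x" for x using scale[of "-1" x] by simp
  show "0 \<le> N x" using tri[of x "- x"] neg[of x] \<open>N 0 = 0\<close> by simp
qed

lemma is_norm_bounded_if_closed_sublevels:
  fixes N :: "'a::banach \<Rightarrow> real"
  assumes N: "is_norm N" and closed: "\<And>c. closed {x. N x \<le> c}"
  shows "\<exists>C. \<forall>x. N x \<le> C * norm x"
proof -
  define F where "F n = {x. N x \<le> real n}" for n :: nat
  have "\<exists>n. interior (F n) \<noteq> {}"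
  proof (rule ccontr)
    assume "\<not> (\<exists>n. interior (F n) \<noteq> {})"
    then have "euclidean interior_of \<Union>(range F) = {}"
      using closed unfolding F_def
      by (intro Baire_category_alt) (auto simp: completely_metrizable_space_euclidean)
    moreover have "\<Union>(range F) = UNIV"
      unfolding F_def by (auto intro: real_nat_ceiling_ge)
    ultimately show False by simp
  qed
  then obtain n x0 where "x0 \<in> interior (F n)" by blast
  then obtain r where r: "r > 0" "ball x0 r \<subseteq> F n" using mem_interior by blast
  \<comment> \<open>Symmetry and the triangle inequality move the ball around x0 to a ball around 0.\<close>
  have small: "N y \<le> real n" if "norm y < r" for y
  proof -
    have near: "x0 + y \<in> F n" "x0 - y \<in> F n" using that r(2) by (auto simp: dist_norm)
    have "2 * N y = N ((x0 + y) + - (x0 - y))"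
      using is_normD(2)[OF N, of 2 y] by (simp add: scaleR_2)
    also have "\<dots> \<le> N (x0 + y) + N (x0 - y)"
      using is_normD(3,4)[OF N] by metis
    finally show ?thesis using near unfolding F_def by simp
  qed
  have "N x \<le> (2 * real n / r) * norm x" for x
  proof (cases "x = 0")
    case False
    define c where "c = r / (2 * norm x)"
    have c: "c > 0" using r False by (simp add: c_def)
    have "c * N x = N (c *\<^sub>R x)" using is_normD(2)[OF N] c by simp
    also have "\<dots> \<le> real n" using small r False by (simp add: c_def)
    finally show ?thesis using c r False by (simp add: c_def field_simps)
  qed (simp add: is_normD[OF N])
  then show ?thesis by blast
qed

lemma norming_functional:
  fixes N :: "'a::real_normed_vector \<Rightarrow> real"
  assumes N: "is_norm N" and bound: "\<And>x. N x \<le> C * norm x"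
  shows "\<exists>z :: 'a \<Rightarrow>\<^sub>L real. z u = N u \<and> (\<forall>x. z x \<le> N x)"
proof -
  obtain f where f: "linear f" "f u = N u" "\<And>x. f x \<le> N x"
    using hahn_banach_sublinear[of N u] is_normD[OF N] by (metis abs_of_nonneg)
  have "\<bar>f x\<bar> \<le> N x" for x
    using f(3)[of x] f(3)[of "- x"] linear_neg[OF f(1)] is_normD(4)[OF N] by (simp add: abs_le_iff)
  then have "bounded_linear f"
    using f(1) bound by (intro bounded_linear_intro[where K = C]) (auto simp: linear_add linear_scale mult.commute intro: order_trans)
  then show ?thesis using f by (intro exI[of _ "Blinfun f"]) (simp add: bounded_linear_Blinfun_apply)
qed

lemma subdiff_norm_powr:
  fixes N :: "'a::real_normed_vector \<Rightarrow> real"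
    and z :: "'a \<Rightarrow>\<^sub>L real"
  assumes N: "is_norm N" and p: "1 < p"
    and z: "z u = N u" "\<And>x. z x \<le> N x"
  shows "N u powr (p - 1) *\<^sub>R z \<in> subdiff (\<lambda>x. ereal (N x powr p / p)) u"
proof -
  define q where "q = p / (p - 1)"
  have q: "1 < q" "1 / p + 1 / q = 1" "(p - 1) * q = p" using p by (auto simp: q_def field_simps)
  define n where "n = N u"
  have n: "0 \<le> n" using is_normD(5)[OF N] by (simp add: n_def)
  have wu: "n powr (p - 1) * z u = n powr p"
    using powr_mult_base[OF n, of "p - 1"] unfolding z(1) n_def[symmetric] by (simp add: mult.commute)
  have "n powr p / p + n powr (p - 1) * z (v - u) \<le> N v powr p / p" for v
  proof -
    have "n powr (p - 1) * z v \<le> n powr (p - 1) * N v" using z(2) by (simp add: mult_left_mono)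
    also have "\<dots> \<le> (n powr (p - 1)) powr q / q + N v powr p / p"
      using Youngs_inequality[OF p q(1), of "N v" "n powr (p - 1)"] q(2) is_normD(5)[OF N]
      by (simp add: add.commute mult.commute)
    also have "(n powr (p - 1)) powr q = n powr p" using q(3) by (simp add: powr_powr)
    finally have "n powr (p - 1) * z v \<le> n powr p / q + N v powr p / p" .
    moreover have "n powr p / p + n powr p / q = n powr p"
      using q(2) by (metis distrib_left mult.right_neutral times_divide_eq_right)
    ultimately show ?thesis
      using wu by (simp add: blinfun.diff_right right_diff_distrib)
  qed
  then show ?thesis unfolding subdiff_def n_def by (simp add: scaleR_blinfun.rep_eq)
qed

section \<open>Fenchel conjugates\<close>

lemma ereal_cmult_diff:
  assumes "0 < c"
  shows "ereal c * (ereal a - x) = ereal (c * a) - ereal c * x"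
  using assms by (cases x) (auto simp: right_diff_distrib)

lemma fenchel_young:
  fixes z :: "'a::real_normed_vector \<Rightarrow>\<^sub>L real"
  shows "ereal (z u) - fenchel_conj J z \<le> J u"
proof -
  have "ereal (z u) - J u \<le> fenchel_conj J z"
    unfolding fenchel_conj_def by (rule SUP_upper) simp
  then show ?thesis by (cases "J u"; cases "fenchel_conj J z") auto
qed

lemma fenchel_young_subdiff:
  fixes z :: "'a::real_normed_vector \<Rightarrow>\<^sub>L real"
  assumes "z \<in> subdiff J u"
  shows "fenchel_conj J z = ereal (z u) - J u"
proof (rule antisym)
  show "fenchel_conj J z \<le> ereal (z u) - J u"
    unfolding fenchel_conj_def
  proof (rule SUP_least)
    fix v
    have "J u + ereal (z v - z u) \<le> J v"
      using assms unfolding subdiff_def by (simp add: blinfun.diff_right)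
    then show "ereal (z v) - J v \<le> ereal (z u) - J u"
      by (cases "J u"; cases "J v") auto
  qed
  show "ereal (z u) - J u \<le> fenchel_conj J z"
    unfolding fenchel_conj_def by (rule SUP_upper) simp
qed

lemma fenchel_conj_antimono:
  fixes z :: "'a::real_normed_vector \<Rightarrow>\<^sub>L real"
  assumes "\<And>u. G u \<le> J u"
  shows "fenchel_conj J z \<le> fenchel_conj G z"
  unfolding fenchel_conj_def using assms by (intro SUP_mono) (auto intro: ereal_minus_mono)

lemma fenchel_conj_cmult:
  fixes z :: "'a::real_normed_vector \<Rightarrow>\<^sub>L real"
  assumes c: "0 < c"
  shows "fenchel_conj (\<lambda>u. ereal c * G u) z = ereal c * fenchel_conj G ((1 / c) *\<^sub>R z)"
proof -
  have "ereal (z u) - ereal c * G u = ereal c * (ereal (((1 / c) *\<^sub>R z) u) - G u)" for u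
    using c by (simp add: ereal_cmult_diff scaleR_blinfun.rep_eq)
  then show ?thesis
    unfolding fenchel_conj_def using c by (simp add: Sup_ereal_mult_left')
qed

lemma fenchel_conj_homogeneous:
  fixes z :: "'a::real_normed_vector \<Rightarrow>\<^sub>L real"
  assumes hom: "\<And>t u. H (t *\<^sub>R u) = ereal (\<bar>t\<bar> powr p) * H u"
    and p: "1 < p" and q: "q = p / (p - 1)" and s: "0 < s"
  shows "fenchel_conj H (s *\<^sub>R z) = ereal (s powr q) * fenchel_conj H z"
proof -
  \<comment> \<open>The substitution v = \<sigma> *R u turns both terms into multiples of s powr q.\<close>
  define \<sigma> where "\<sigma> = s powr (q - 1)"
  have \<sigma>: "0 < \<sigma>" "s * \<sigma> = s powr q" "\<sigma> powr p = s powr q"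
  proof -
    show "0 < \<sigma>" using s by (simp add: \<sigma>_def)
    show "s * \<sigma> = s powr q" using s by (simp add: \<sigma>_def powr_mult_base)
    have "(q - 1) * p = q" using p unfolding q by (simp add: field_simps)
    then show "\<sigma> powr p = s powr q" by (simp add: \<sigma>_def powr_powr)
  qed
  have surj: "range (\<lambda>u. \<sigma> *\<^sub>R u) = (UNIV :: 'a set)"
    by (rule surjI[of _ "\<lambda>v. (1 / \<sigma>) *\<^sub>R v"]) (use \<sigma>(1) in simp)
  have "fenchel_conj H (s *\<^sub>R z) = (SUP u. ereal ((s *\<^sub>R z) (\<sigma> *\<^sub>R u)) - H (\<sigma> *\<^sub>R u))"
    unfolding fenchel_conj_def by (subst surj[symmetric]) (simp add: image_image)
  also have "\<dots> = (SUP u. ereal (s powr q) * (ereal (z u) - H u))"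
    using \<sigma> hom s by (simp add: ereal_cmult_diff scaleR_blinfun.rep_eq blinfun.scaleR_right flip: mult.assoc)
  also have "\<dots> = ereal (s powr q) * fenchel_conj H z"
    unfolding fenchel_conj_def by (simp add: Sup_ereal_mult_left')
  finally show ?thesis .
qed

lemma fenchel_conj_nonneg:
  fixes z :: "'a::real_normed_vector \<Rightarrow>\<^sub>L real"
  assumes "H 0 = 0"
  shows "0 \<le> fenchel_conj H z"
  unfolding fenchel_conj_def using assms by (intro SUP_upper2[of 0]) auto

lemma subdiff_homogeneous_euler:
  fixes f :: "'a::real_normed_vector \<Rightarrow> ereal"
  assumes hom: "\<And>t. f (t *\<^sub>R u) = ereal (\<bar>t\<bar> powr p) * f u"
    and fin: "f u = ereal a" and w: "w \<in> subdiff f u"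
  shows "w u = p * a"
proof -
  have min: "(1 + s) powr p * a - s * w u \<ge> 1 powr p * a - 0 * w u" if "\<bar>0 - s\<bar> < 1" for s
  proof -
    have "f u + ereal (w ((1 + s) *\<^sub>R u - u)) \<le> f ((1 + s) *\<^sub>R u)"
      using w unfolding subdiff_def by blast
    moreover have "(1 + s) *\<^sub>R u - u = s *\<^sub>R u" by (simp add: algebra_simps)
    ultimately show ?thesis using hom[of "1 + s"] fin that by (simp add: blinfun.scaleR_right)
  qed
  have "((\<lambda>s. (1 + s) powr p * a - s * w u) has_real_derivative p * a - w u) (at 0)"
    by (auto intro!: derivative_eq_intros)
  then have "p * a - w u = 0"
    by (rule DERIV_local_min[OF _ zero_less_one]) (use min in auto)
  then show ?thesis by simp
qed

section \<open>The functional H\<close>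

lemma admissible_H_homogeneous:
  assumes "admissible_H p H"
  shows "H (t *\<^sub>R u) = ereal (\<bar>t\<bar> powr p) * H u"
  using assms unfolding admissible_H_def by blast

lemma admissible_H_zero:
  assumes "admissible_H p H"
  shows "H 0 = 0"
  using admissible_H_homogeneous[OF assms, of 0 0] by (metis abs_zero ereal_eq_0(2) ereal_zero_mult powr_0 scale_zero_left)

lemma admissible_H_nonneg:
  assumes H: "admissible_H p H"
  shows "0 \<le> H u"
proof -
  have "\<forall>x y t. 0 < t \<and> t < 1 \<longrightarrow> H (t *\<^sub>R x + (1 - t) *\<^sub>R y) \<le> ereal t * H x + ereal (1 - t) * H y"
    using H unfolding admissible_H_def Gamma0_def convex_fun_def by blast
  then have "H ((1/2) *\<^sub>R u + (1 - 1/2) *\<^sub>R (- u)) \<le> ereal (1/2) * H u + ereal (1 - 1/2) * H (- u)"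
    by (metis field_sum_of_halves half_gt_zero_iff zero_less_one less_add_same_cancel1)
  moreover have "H (- u) = H u" using admissible_H_homogeneous[OF H, of "-1"] by simp
  moreover have "H 0 = 0" by (rule admissible_H_zero[OF H])
  moreover have "H u \<noteq> \<infinity>" "H u \<noteq> -\<infinity>"
    using H unfolding admissible_H_def Gamma0_def proper_fun_def by auto
  ultimately show ?thesis by (cases "H u") (auto simp: algebra_simps)
qed

lemma admissible_H_norm_powr:
  assumes H: "admissible_H p H" and p: "1 < p"
  shows "H u = ereal (H_norm p H u powr p / p)"
proof -
  obtain h where h: "H u = ereal h" "0 \<le> h"
    using H admissible_H_nonneg[OF H, of u] unfolding admissible_H_def by (cases "H u") auto
  then have "((p * h) powr (1 / p)) powr p = p * h" using p by (simp add: powr_powr)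
  then show ?thesis using h p unfolding H_norm_def by simp
qed

lemma admissible_H_pos:
  assumes H: "admissible_H p H" and p: "1 < p" and u: "u \<noteq> 0"
  shows "0 < H u"
proof -
  have "is_norm (H_norm p H)" using H unfolding admissible_H_def by blast
  then have "0 < H_norm p H u" using is_normD(5,6) u by (metis order_le_less)
  then show ?thesis using admissible_H_norm_powr[OF H p, of u] p by simp
qed

lemma admissible_H_norm_closed_sublevel:
  assumes H: "admissible_H p H" and p: "1 < p"
  shows "closed {x. H_norm p H x \<le> c}"
proof -
  have N: "is_norm (H_norm p H)" using H unfolding admissible_H_def by blast
  show ?thesis
  proof (cases "c < 0")
    case True
    then have "{x. H_norm p H x \<le> c} = {}"
      using is_normD(5)[OF N] by (metis Collect_empty_eq linorder_not_le order_less_le_trans)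
    then show ?thesis by simp
  next
    case False
    have "H_norm p H x \<le> c \<longleftrightarrow> H_norm p H x powr p \<le> c powr p" for x
      using is_normD(5)[OF N, of x] False p by (smt (verit) powr_less_mono2 powr_mono2)
    then have "H_norm p H x \<le> c \<longleftrightarrow> H x \<le> ereal (c powr p / p)" for x
      using admissible_H_norm_powr[OF H p, of x] p by (simp add: divide_le_cancel)
    then have "{x. H_norm p H x \<le> c} = {x. H x \<le> ereal (c powr p / p)}" by blast
    then show ?thesis using H unfolding admissible_H_def Gamma0_def lsc_fun_def by simp
  qed
qed

lemma admissible_H_subdiff_nonempty:
  fixes H :: "'a::banach \<Rightarrow> ereal"
  assumes H: "admissible_H p H" and p: "1 < p"
  shows "\<exists>w. w \<in> subdiff H u"
proof -
  have N: "is_norm (H_norm p H)" using H unfolding admissible_H_def by blast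
  obtain C where "\<And>x. H_norm p H x \<le> C * norm x"
    using is_norm_bounded_if_closed_sublevels[OF N admissible_H_norm_closed_sublevel[OF H p]] by blast
  then obtain z :: "'a \<Rightarrow>\<^sub>L real" where "z u = H_norm p H u" "\<And>x. z x \<le> H_norm p H x"
    using norming_functional[OF N] by blast
  then have "H_norm p H u powr (p - 1) *\<^sub>R z \<in> subdiff (\<lambda>x. ereal (H_norm p H x powr p / p)) u"
    by (rule subdiff_norm_powr[OF N p])
  moreover have "(\<lambda>x. ereal (H_norm p H x powr p / p)) = H"
    using admissible_H_norm_powr[OF H p] by (simp add: fun_eq_iff)
  ultimately show ?thesis by auto
qed

section \<open>Lower bounds and their duals\<close>

lemma ereal_divide_le_of_le_mult:
  assumes "a \<le> ereal t * b" "0 \<le> b" "0 < t"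
  shows "a / b \<le> ereal t"
proof (cases b)
  case (real r)
  show ?thesis
  proof (cases "r = 0")
    case True
    then have "a \<le> 0" using assms(1) real by (simp add: zero_ereal_def)
    then show ?thesis using real True assms(3) by (cases a) (auto simp: divide_ereal_def)
  next
    case False
    then have "0 < r" using assms(2) real by simp
    then show ?thesis using assms(1) real by (subst ereal_divide_le_pos) (auto simp: mult.commute)
  qed
qed (use assms in auto)

lemma fenchel_conj_le_of_lower_bound:
  fixes J H :: "'a::real_normed_vector \<Rightarrow> ereal"
  assumes H: "admissible_H p H" and p: "1 < p" and q: "q = p / (p - 1)" and lam: "0 < lam"
    and ge: "\<And>u. ereal lam * H u \<le> J u"
  shows "fenchel_conj J z \<le> ereal (lam powr (1 - q)) * fenchel_conj H z"
proof -
  have "fenchel_conj J z \<le> fenchel_conj (\<lambda>u. ereal lam * H u) z"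
    by (rule fenchel_conj_antimono) (rule ge)
  also have "\<dots> = ereal lam * fenchel_conj H ((1 / lam) *\<^sub>R z)"
    by (rule fenchel_conj_cmult[OF lam])
  also have "\<dots> = ereal (lam * (1 / lam) powr q) * fenchel_conj H z"
    using fenchel_conj_homogeneous[OF admissible_H_homogeneous[OF H] p q, of "1 / lam"] lam
    by (simp flip: mult.assoc)
  also have "lam * (1 / lam) powr q = lam powr (1 - q)"
    using lam by (simp add: powr_diff powr_divide)
  finally show ?thesis .
qed

lemma lower_bound_of_fenchel_conj_le:
  fixes J H :: "'a::banach \<Rightarrow> ereal"
  assumes H: "admissible_H p H" and p: "1 < p" and q: "q = p / (p - 1)" and lam: "0 < lam"
    and le: "\<And>z. fenchel_conj J z \<le> ereal (lam powr (1 - q)) * fenchel_conj H z"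
  shows "ereal lam * H u \<le> J u"
proof -
  obtain w where w: "w \<in> subdiff H u" using admissible_H_subdiff_nonempty[OF H p] by blast
  obtain h where h: "H u = ereal h"
    using H admissible_H_nonneg[OF H, of u] unfolding admissible_H_def by (cases "H u") auto
  have "fenchel_conj H (lam *\<^sub>R w) = ereal (lam powr q * (w u - h))"
    using fenchel_conj_homogeneous[OF admissible_H_homogeneous[OF H] p q lam]
      fenchel_young_subdiff[OF w] h by simp
  then have "ereal lam * H u = ereal ((lam *\<^sub>R w) u) - ereal (lam powr (1 - q)) * fenchel_conj H (lam *\<^sub>R w)"
    using h lam by (simp add: scaleR_blinfun.rep_eq powr_diff field_simps)
  also have "\<dots> \<le> ereal ((lam *\<^sub>R w) u) - fenchel_conj J (lam *\<^sub>R w)"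
    by (rule ereal_minus_mono) (simp_all add: le)
  also have "\<dots> \<le> J u" by (rule fenchel_young)
  finally show ?thesis .
qed

lemma dual_rayleigh_eigenvector:
  fixes J H :: "'a::real_normed_vector \<Rightarrow> ereal"
  assumes H: "admissible_H p H" and p: "1 < p" and q: "q = p / (p - 1)" and lam: "0 < lam"
    and ev: "p_eigenvector J H u z lam"
  shows "dual_rayleigh J H z = ereal (lam powr (1 - q))"
proof -
  obtain w where u: "u \<noteq> 0" and zJ: "z \<in> subdiff J u" and R: "J u / H u = ereal lam"
    and w: "w \<in> subdiff H u" and zw: "z = lam *\<^sub>R w"
    using ev unfolding p_eigenvector_def rayleigh_def by auto
  obtain h where h: "H u = ereal h" "0 < h"
    using admissible_H_pos[OF H p u] H unfolding admissible_H_def by (cases "H u") auto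
  have Ju: "J u = ereal (lam * h)"
    using R h by (cases "J u") (auto simp: field_simps)
  have wu: "w u = p * h"
    by (rule subdiff_homogeneous_euler[OF admissible_H_homogeneous[OF H] h(1) w])
  have "fenchel_conj J z = ereal (lam * ((p - 1) * h))"
    using fenchel_young_subdiff[OF zJ] Ju wu zw by (simp add: scaleR_blinfun.rep_eq algebra_simps)
  moreover have "fenchel_conj H z = ereal (lam powr q * ((p - 1) * h))"
    using fenchel_conj_homogeneous[OF admissible_H_homogeneous[OF H] p q lam]
      fenchel_young_subdiff[OF w] h wu zw by (simp add: algebra_simps)
  moreover have "(p - 1) * h \<noteq> 0" using p h by simp
  ultimately show ?thesis
    unfolding dual_rayleigh_def using lam by (simp add: powr_diff)
qed

lemma lower_bound_of_rayleigh_ge: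
  assumes H: "admissible_H p H" and p: "1 < p"
    and growth: "\<exists>c>0. \<forall>u. H u \<le> ereal c * J u"
    and R: "\<And>v. v \<noteq> 0 \<Longrightarrow> ereal lam \<le> rayleigh J H v"
  shows "ereal lam * H v \<le> J v"
proof (cases "v = 0")
  case True
  obtain c where "0 < c" "H 0 \<le> ereal c * J 0" using growth by blast
  then have "0 \<le> J 0" using admissible_H_zero[OF H] by (cases "J 0") (auto simp: zero_le_mult_iff)
  then show ?thesis using True admissible_H_zero[OF H] by simp
next
  case False
  obtain h where h: "H v = ereal h" "0 < h"
    using admissible_H_pos[OF H p False] H unfolding admissible_H_def by (cases "H v") auto
  then have "ereal lam \<le> J v / ereal h" using R[OF False] unfolding rayleigh_def by simp
  then show ?thesis using h by (simp add: ereal_le_divide_pos mult.commute)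
qed

theorem lemma2p2:
  fixes J H :: "'a::banach \<Rightarrow> ereal" and p q lam :: real
  assumes refl: "reflexive_space TYPE('a)"
    and p: "1 < p" and q: "q = p / (p - 1)"
    and J: "Gamma0 J" and H: "admissible_H p H"
    and growth: "\<exists>c>0. \<forall>u. H u \<le> ereal c * J u"
    and lam: "lam > 0"
  shows "((\<forall>u. J u \<ge> ereal lam * H u) \<longleftrightarrow>
           (\<forall>z. fenchel_conj J z \<le> ereal (lam powr (1 - q)) * fenchel_conj H z))
       \<and> (\<forall>u z. p_eigenvector J H u z lam \<and> (\<forall>v. v \<noteq> 0 \<longrightarrow> ereal lam \<le> rayleigh J H v) \<longrightarrow>
           dual_rayleigh J H z = ereal (lam powr (1 - q)) \<and>
           (\<forall>w. w \<noteq> 0 \<longrightarrow> dual_rayleigh J H w \<le> ereal (lam powr (1 - q))))"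
proof (intro conjI allI impI iffI)
  show "fenchel_conj J z \<le> ereal (lam powr (1 - q)) * fenchel_conj H z"
    if "\<forall>u. ereal lam * H u \<le> J u" for z
    using fenchel_conj_le_of_lower_bound[OF H p q lam] that by blast
  show "ereal lam * H u \<le> J u"
    if "\<forall>z. fenchel_conj J z \<le> ereal (lam powr (1 - q)) * fenchel_conj H z" for u
    using lower_bound_of_fenchel_conj_le[OF H p q lam] that by blast
next
  fix u z
  assume eig: "p_eigenvector J H u z lam \<and> (\<forall>v. v \<noteq> 0 \<longrightarrow> ereal lam \<le> rayleigh J H v)"
  then show "dual_rayleigh J H z = ereal (lam powr (1 - q))"
    using dual_rayleigh_eigenvector[OF H p q lam] by blast
  fix w :: "'a \<Rightarrow>\<^sub>L real"
  have "ereal lam * H v \<le> J v" for v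
    using lower_bound_of_rayleigh_ge[OF H p growth] eig by blast
  then have "fenchel_conj J w \<le> ereal (lam powr (1 - q)) * fenchel_conj H w"
    by (rule fenchel_conj_le_of_lower_bound[OF H p q lam])
  then show "dual_rayleigh J H w \<le> ereal (lam powr (1 - q))"
    unfolding dual_rayleigh_def using lam
    by (intro ereal_divide_le_of_le_mult fenchel_conj_nonneg admissible_H_zero[OF H]) auto
qed

end
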